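(* Let $k \ge 2$ be an integer. Let $\mathcal{G}$ be a hereditary class of finite simple graphs such that every graph $G \in \mathcal{G}$ contains a $k$-simplicial vertex. Then every graph in $\mathcal{G}$ with at least one edge is $(k+1)$-divisible.
   Context: A class of graphs is hereditary if it is closed under taking induced subgraphs. A vertex $v$ of a graph $G$ is $k$-simplicial if its neighborhood $N_G(v)$ can be partitioned into $k$ (possibly empty) cliques. For an integer $m \ge 2$, a graph $G$ with at least one edge is $m$-divisible if for every induced subgraph $H$ of $G$ with at least one edge, the vertex set $V(H)$ can be partitioned into $m$ sets, none of which contains a maximum clique of $H$ (i.e. none contains a clique of size $\omega(H)$, where $\omega(H)$ is the clique number of $H$). *)

theory Defs
  imports Main
begin

type_synonym 'a graph = "'a set \<times> ('a \<Rightarrow> 'a \<Rightarrow> bool)"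

definition verts :: "'a graph \<Rightarrow> 'a set" where
  "verts G = fst G"

definition adj :: "'a graph \<Rightarrow> 'a \<Rightarrow> 'a \<Rightarrow> bool" where
  "adj G = snd G"

definition finite_simple_graph :: "'a graph \<Rightarrow> bool" where
  "finite_simple_graph G \<longleftrightarrow> finite (verts G)
     \<and> (\<forall>u v. adj G u v \<longrightarrow> u \<in> verts G \<and> v \<in> verts G)
     \<and> (\<forall>u v. adj G u v \<longrightarrow> adj G v u)
     \<and> (\<forall>v. \<not> adj G v v)"

definition induced_subgraph :: "'a graph \<Rightarrow> 'a set \<Rightarrow> 'a graph" where
  "induced_subgraph G S = (S, \<lambda>u v. adj G u v \<and> u \<in> S \<and> v \<in> S)"

definition is_induced_subgraph :: "'a graph \<Rightarrow> 'a graph \<Rightarrow> bool" where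
  "is_induced_subgraph H G \<longleftrightarrow> (\<exists>S. S \<subseteq> verts G \<and> H = induced_subgraph G S)"

definition hereditary :: "('a graph \<Rightarrow> bool) \<Rightarrow> bool" where
  "hereditary \<G> \<longleftrightarrow> (\<forall>G H. \<G> G \<and> is_induced_subgraph H G \<longrightarrow> \<G> H)"

definition has_edge :: "'a graph \<Rightarrow> bool" where
  "has_edge G \<longleftrightarrow> (\<exists>u v. adj G u v)"

definition neighborhood :: "'a graph \<Rightarrow> 'a \<Rightarrow> 'a set" where
  "neighborhood G v = {u \<in> verts G. adj G v u}"

definition is_clique :: "'a graph \<Rightarrow> 'a set \<Rightarrow> bool" where
  "is_clique G K \<longleftrightarrow> K \<subseteq> verts G \<and> (\<forall>u\<in>K. \<forall>w\<in>K. u \<noteq> w \<longrightarrow> adj G u w)"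

definition clique_number :: "'a graph \<Rightarrow> nat" where
  "clique_number G = Max {card K | K. is_clique G K}"

text \<open>v is k-simplicial: N(v) can be partitioned into k (possibly empty) cliques,
  i.e. there is a labelling of N(v) by k labels whose classes are cliques.\<close>
definition k_simplicial :: "nat \<Rightarrow> 'a graph \<Rightarrow> 'a \<Rightarrow> bool" where
  "k_simplicial k G v \<longleftrightarrow>
     (\<exists>f :: 'a \<Rightarrow> nat. (\<forall>u\<in>neighborhood G v. f u < k)
        \<and> (\<forall>i<k. is_clique G {u \<in> neighborhood G v. f u = i}))"

text \<open>V(H) can be partitioned into m (possibly empty) sets none of which contains a
  maximum clique of H.\<close>
definition m_partition_no_max_clique :: "nat \<Rightarrow> 'a graph \<Rightarrow> bool" where
  "m_partition_no_max_clique m H \<longleftrightarrow>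
     (\<exists>f :: 'a \<Rightarrow> nat. (\<forall>v\<in>verts H. f v < m)
        \<and> (\<forall>i<m. \<not> (\<exists>K. is_clique H K \<and> card K = clique_number H
                              \<and> K \<subseteq> {v \<in> verts H. f v = i})))"

definition divisible :: "nat \<Rightarrow> 'a graph \<Rightarrow> bool" where
  "divisible m G \<longleftrightarrow> has_edge G \<and>
     (\<forall>H. is_induced_subgraph H G \<and> has_edge H \<longrightarrow> m_partition_no_max_clique m H)"

end

theory Submission
  imports Defs
begin

(* Let v be k-simplicial in G and \<omega> = \<omega>(G) \<ge> 2.
   Each of the k cliques covering N(v) extends by v to a clique, so |N(v)| \<le> k(\<omega> - 1).
   If some maximum clique of G avoids v, then G - v has clique number \<omega>; divide it into
   k + 1 classes by induction. By pigeonhole one class meets N(v) in fewer than \<omega> - 1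
   vertices, and v can join that class: a maximum clique through v would need \<omega> - 1
   neighbours of v there. If every maximum clique contains v, the two classes {v} and
   V(G) - {v} already work. *)

lemma verts_induced_subgraph [simp]: "verts (induced_subgraph G S) = S"
  by (simp add: verts_def induced_subgraph_def)

lemma adj_induced_subgraph [simp]:
  "adj (induced_subgraph G S) u w \<longleftrightarrow> adj G u w \<and> u \<in> S \<and> w \<in> S"
  by (simp add: adj_def induced_subgraph_def)

lemma is_clique_induced_subgraph:
  "S \<subseteq> verts G \<Longrightarrow> is_clique (induced_subgraph G S) K \<longleftrightarrow> is_clique G K \<and> K \<subseteq> S"
  unfolding is_clique_def by auto

lemma finite_simple_graphD:
  assumes "finite_simple_graph G"
  shows finite_verts: "finite (verts G)"
    and adj_in_verts: "adj G u v \<Longrightarrow> u \<in> verts G \<and> v \<in> verts G"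
    and adj_sym: "adj G u v \<Longrightarrow> adj G v u"
    and not_adj_self: "\<not> adj G v v"
  using assms unfolding finite_simple_graph_def by blast+

lemma finite_simple_graph_induced_subgraph:
  "finite_simple_graph G \<Longrightarrow> S \<subseteq> verts G \<Longrightarrow> finite_simple_graph (induced_subgraph G S)"
  unfolding finite_simple_graph_def
  by (auto simp: verts_def[symmetric] adj_def[symmetric] intro: finite_subset)

lemma finite_clique: "finite_simple_graph G \<Longrightarrow> is_clique G K \<Longrightarrow> finite K"
  unfolding is_clique_def using finite_verts finite_subset by blast

lemma finite_clique_cards: "finite_simple_graph G \<Longrightarrow> finite {card K | K. is_clique G K}"
  by (rule finite_subset[of _ "card ` Pow (verts G)"]) (auto simp: is_clique_def finite_verts)

lemma card_le_clique_number:
  "finite_simple_graph G \<Longrightarrow> is_clique G K \<Longrightarrow> card K \<le> clique_number G"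
  unfolding clique_number_def using finite_clique_cards by (intro Max_ge) blast+

lemma ex_maximum_clique:
  assumes "finite_simple_graph G"
  obtains K where "is_clique G K" "card K = clique_number G"
proof -
  have "is_clique G {}" by (simp add: is_clique_def)
  then have "clique_number G \<in> {card K | K. is_clique G K}"
    unfolding clique_number_def using finite_clique_cards[OF assms] by (intro Max_in) auto
  then show thesis using that by auto
qed

lemma has_edge_iff_clique_number_ge_2:
  assumes G: "finite_simple_graph G"
  shows "has_edge G \<longleftrightarrow> 2 \<le> clique_number G"
proof
  assume "has_edge G"
  then obtain u w where "adj G u w" unfolding has_edge_def by blast
  then have "u \<noteq> w" "is_clique G {u, w}"
    using G not_adj_self adj_in_verts adj_sym unfolding is_clique_def by fastforce+
  then show "2 \<le> clique_number G" using card_le_clique_number[OF G] by fastforce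
next
  assume "2 \<le> clique_number G"
  moreover obtain K where "is_clique G K" "card K = clique_number G"
    using ex_maximum_clique[OF G] .
  ultimately obtain u w where "u \<in> K" "w \<in> K" "u \<noteq> w"
    using card_le_Suc0_iff_eq[OF finite_clique[OF G]] by fastforce
  with \<open>is_clique G K\<close> show "has_edge G" unfolding is_clique_def has_edge_def by blast
qed

lemma clique_number_induced_subgraph_eq:
  assumes G: "finite_simple_graph G" and "S \<subseteq> verts G"
    and K: "is_clique G K" "card K = clique_number G" "K \<subseteq> S"
  shows "clique_number (induced_subgraph G S) = clique_number G"
proof -
  let ?H = "induced_subgraph G S"
  have H: "finite_simple_graph ?H"
    using finite_simple_graph_induced_subgraph[OF G \<open>S \<subseteq> verts G\<close>] .
  obtain L where "is_clique ?H L" "card L = clique_number ?H"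
    using ex_maximum_clique[OF H] .
  then have "clique_number ?H \<le> clique_number G"
    using is_clique_induced_subgraph[OF \<open>S \<subseteq> verts G\<close>] card_le_clique_number[OF G] by metis
  moreover have "clique_number G \<le> clique_number ?H"
    using K is_clique_induced_subgraph[OF \<open>S \<subseteq> verts G\<close>] card_le_clique_number[OF H] by metis
  ultimately show ?thesis by simp
qed

lemma is_clique_insert:
  assumes G: "finite_simple_graph G" and "is_clique G C" "v \<in> verts G" "\<forall>u\<in>C. adj G v u"
  shows "is_clique G (insert v C)"
  using assms adj_sym[OF G] unfolding is_clique_def by blast

lemma card_neighborhood_le_if_k_simplicial:
  assumes G: "finite_simple_graph G" and v: "v \<in> verts G" and "k_simplicial k G v"
  shows "card (neighborhood G v) \<le> k * (clique_number G - 1)"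
proof -
  let ?N = "neighborhood G v"
  obtain f where f_lt: "\<forall>u\<in>?N. f u < k" and f_clique: "\<forall>i<k. is_clique G {u\<in>?N. f u = i}"
    using \<open>k_simplicial k G v\<close> unfolding k_simplicial_def by blast
  have finite_N: "finite ?N" using finite_verts[OF G] by (simp add: neighborhood_def)
  have class_bound: "card {u\<in>?N. f u = i} \<le> clique_number G - 1" if "i < k" for i
  proof -
    let ?C = "{u\<in>?N. f u = i}"
    have "is_clique G (insert v ?C)"
      using is_clique_insert[OF G _ v] f_clique that by (simp add: neighborhood_def)
    then have "card (insert v ?C) \<le> clique_number G" by (rule card_le_clique_number[OF G])
    moreover have "v \<notin> ?C" using not_adj_self[OF G] by (simp add: neighborhood_def)
    ultimately show ?thesis using finite_N by simp
  qed
  have "card ?N = card (\<Union>i<k. {u\<in>?N. f u = i})"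
    using f_lt by (intro arg_cong[where f = card]) blast
  also have "\<dots> = (\<Sum>i<k. card {u\<in>?N. f u = i})"
    by (rule card_UN_disjoint) (auto simp: finite_N)
  also have "\<dots> \<le> k * (clique_number G - 1)"
    using sum_mono[of "{..<k}", OF class_bound] by simp
  finally show ?thesis .
qed

lemma ex_small_fibre:
  assumes "finite A" and "card A < m * c"
  shows "\<exists>i<m. card {a\<in>A. f a = i} < c"
proof (rule ccontr)
  assume "\<not> ?thesis"
  then have "c \<le> card {a\<in>A. f a = i}" if "i < m" for i
    using that not_less by blast
  then have "m * c \<le> (\<Sum>i<m. card {a\<in>A. f a = i})"
    using sum_mono[of "{..<m}" "\<lambda>_. c"] by simp
  also have "\<dots> = card (\<Union>i<m. {a\<in>A. f a = i})"
    using \<open>finite A\<close> by (intro card_UN_disjoint[symmetric]) auto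
  also have "\<dots> \<le> card A" using \<open>finite A\<close> by (intro card_mono) auto
  finally show False using \<open>card A < m * c\<close> by simp
qed

lemma m_partition_no_max_cliqueI:
  assumes "\<forall>v\<in>verts H. f v < m"
    and "\<And>i K. i < m \<Longrightarrow> is_clique H K \<Longrightarrow> card K = clique_number H \<Longrightarrow>
           K \<subseteq> {v\<in>verts H. f v = i} \<Longrightarrow> False"
  shows "m_partition_no_max_clique m H"
  using assms unfolding m_partition_no_max_clique_def by blast

lemma m_partition_no_max_cliqueE:
  assumes "m_partition_no_max_clique m H"
  obtains f where "\<forall>v\<in>verts H. f v < m"
    and "\<And>i K. i < m \<Longrightarrow> is_clique H K \<Longrightarrow> card K = clique_number H \<Longrightarrow>
           K \<subseteq> {v\<in>verts H. f v = i} \<Longrightarrow> False"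
  using assms unfolding m_partition_no_max_clique_def by blast

lemma m_partition_no_max_clique_add_simplicial_vertex:
  assumes G: "finite_simple_graph G" and "has_edge G"
    and v: "v \<in> verts G" "k_simplicial k G v"
    and K: "is_clique G K" "card K = clique_number G" "K \<subseteq> verts G - {v}"
    and part: "m_partition_no_max_clique (k + 1) (induced_subgraph G (verts G - {v}))"
  shows "m_partition_no_max_clique (k + 1) G"
proof -
  let ?S = "verts G - {v}" and ?N = "neighborhood G v" and ?\<omega> = "clique_number G"
  let ?H = "induced_subgraph G ?S"
  have \<omega>_ge_2: "2 \<le> ?\<omega>" using has_edge_iff_clique_number_ge_2[OF G] \<open>has_edge G\<close> by blast
  have \<omega>_eq: "clique_number ?H = ?\<omega>"
    using clique_number_induced_subgraph_eq[OF G _ K] by blast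
  obtain f where f_lt: "\<forall>u\<in>?S. f u < k + 1"
    and f_part: "\<And>i L. i < k + 1 \<Longrightarrow> is_clique ?H L \<Longrightarrow> card L = clique_number ?H \<Longrightarrow>
                   L \<subseteq> {u\<in>?S. f u = i} \<Longrightarrow> False"
    using m_partition_no_max_cliqueE[OF part] by auto
  have finite_N: "finite ?N" using finite_verts[OF G] by (simp add: neighborhood_def)
  have "card ?N \<le> k * (?\<omega> - 1)" by (rule card_neighborhood_le_if_k_simplicial[OF G v])
  also have "\<dots> < (k + 1) * (?\<omega> - 1)" using \<omega>_ge_2 by simp
  finally obtain i where i: "i < k + 1" and few: "card {u\<in>?N. f u = i} < ?\<omega> - 1"
    using ex_small_fibre[OF finite_N] by blast
  show ?thesis
  proof (rule m_partition_no_max_cliqueI[where f = "f(v := i)"])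
    show "\<forall>u\<in>verts G. (f(v := i)) u < k + 1" using f_lt i by auto
  next
    fix j L assume j: "j < k + 1" and L: "is_clique G L" "card L = ?\<omega>"
      and L_class: "L \<subseteq> {u\<in>verts G. (f(v := i)) u = j}"
    show False
    proof (cases "v \<in> L")
      case False
      then have "is_clique ?H L" "L \<subseteq> {u\<in>?S. f u = j}"
        using L L_class is_clique_induced_subgraph[of ?S G] by auto
      then show False using f_part[OF j] L \<omega>_eq by simp
    next
      case True
      then have "j = i" using L_class by auto
      then have "L - {v} \<subseteq> {u\<in>?N. f u = i}"
        using L True L_class unfolding is_clique_def neighborhood_def by auto
      then have "card (L - {v}) \<le> card {u\<in>?N. f u = i}"
        using finite_N by (intro card_mono) auto
      moreover have "card (L - {v}) = ?\<omega> - 1" using L True finite_clique[OF G] by simp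
      ultimately show False using few by simp
    qed
  qed
qed

lemma m_partition_no_max_clique_isolate_vertex:
  assumes "2 \<le> m" and "2 \<le> clique_number G"
    and through_v: "\<And>K. is_clique G K \<Longrightarrow> card K = clique_number G \<Longrightarrow> v \<in> K"
  shows "m_partition_no_max_clique m G"
proof (rule m_partition_no_max_cliqueI[where f = "\<lambda>u. if u = v then 0 else 1"])
  show "\<forall>u\<in>verts G. (if u = v then 0 else 1) < m" using \<open>2 \<le> m\<close> by auto
next
  fix i :: nat and K assume K: "is_clique G K" "card K = clique_number G"
    and K_class: "K \<subseteq> {u\<in>verts G. (if u = v then 0 else 1) = i}"
  have "v \<in> K" using through_v[OF K] .
  then have "i = 0" using K_class by auto
  then have "K \<subseteq> {v}" using K_class by (auto simp: subset_iff split: if_splits)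
  then have "card K \<le> 1" using card_mono[of "{v}" K] by simp
  then show False using K \<open>2 \<le> clique_number G\<close> by simp
qed

lemma m_partition_no_max_clique_if_simplicial_vertices:
  assumes "1 \<le> k"
    and graphs: "\<forall>G. \<G> G \<longrightarrow> finite_simple_graph G"
    and "hereditary \<G>"
    and simplicial: "\<forall>G. \<G> G \<and> verts G \<noteq> {} \<longrightarrow> (\<exists>v\<in>verts G. k_simplicial k G v)"
  shows "\<G> G \<Longrightarrow> has_edge G \<Longrightarrow> m_partition_no_max_clique (k + 1) G"
proof (induction "card (verts G)" arbitrary: G rule: less_induct)
  case less
  have G: "finite_simple_graph G" using graphs less.prems(1) by blast
  have \<omega>_ge_2: "2 \<le> clique_number G"
    using has_edge_iff_clique_number_ge_2[OF G] less.prems(2) by blast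
  have "verts G \<noteq> {}" using less.prems(2) adj_in_verts[OF G] unfolding has_edge_def by blast
  then obtain v where v: "v \<in> verts G" "k_simplicial k G v" using simplicial less.prems(1) by blast
  let ?S = "verts G - {v}"
  show ?case
  proof (cases "\<exists>K. is_clique G K \<and> card K = clique_number G \<and> K \<subseteq> ?S")
    case True
    then obtain K where K: "is_clique G K" "card K = clique_number G" "K \<subseteq> ?S" by blast
    let ?H = "induced_subgraph G ?S"
    have "\<G> ?H"
      using \<open>hereditary \<G>\<close> less.prems(1) unfolding hereditary_def is_induced_subgraph_def by blast
    moreover have "has_edge ?H"
      using has_edge_iff_clique_number_ge_2[OF finite_simple_graph_induced_subgraph[OF G]] \<omega>_ge_2
        clique_number_induced_subgraph_eq[OF G _ K] by simp
    moreover have "card (verts ?H) < card (verts G)"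
      using card_Diff1_less[OF finite_verts[OF G] v(1)] by simp
    ultimately have "m_partition_no_max_clique (k + 1) ?H" using less.hyps by blast
    then show ?thesis
      using m_partition_no_max_clique_add_simplicial_vertex[OF G less.prems(2) v K] by blast
  next
    case False
    then have through_v: "\<And>K. is_clique G K \<Longrightarrow> card K = clique_number G \<Longrightarrow> v \<in> K"
      unfolding is_clique_def by blast
    show ?thesis
      using \<open>1 \<le> k\<close> by (intro m_partition_no_max_clique_isolate_vertex[OF _ \<omega>_ge_2 through_v]) simp
  qed
qed

theorem theorem1p5:
  fixes \<G> :: "'a graph \<Rightarrow> bool" and k :: nat
  assumes "k \<ge> 2"
    and "\<forall>G. \<G> G \<longrightarrow> finite_simple_graph G"
    and "hereditary \<G>"
    and "\<forall>G. \<G> G \<and> verts G \<noteq> {} \<longrightarrow> (\<exists>v\<in>verts G. k_simplicial k G v)"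
  shows "\<forall>G. \<G> G \<and> has_edge G \<longrightarrow> divisible (k + 1) G"
proof (intro allI impI)
  fix G assume G: "\<G> G \<and> has_edge G"
  have "\<G> H" if "is_induced_subgraph H G" for H
    using G that \<open>hereditary \<G>\<close> unfolding hereditary_def by blast
  then show "divisible (k + 1) G"
    using m_partition_no_max_clique_if_simplicial_vertices[of k \<G>] assms G
    unfolding divisible_def by simp
qed

end
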